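(* Let $X$ be a topological space and $T$ a locally compact Hausdorff space such that the mapping space $C(T,X)$ (with the compact-open topology) has the fixed point property. Then $X$ has the fixed point property with respect to $T$.
   Context: A space has the fixed point property if every continuous self-map of it has a fixed point. The compact-open topology on $C(T,X)$ is generated by the sets $\{g\colon T\to X\mid g(K)\subseteq U\}$ for $K\subseteq T$ compact and $U\subseteq X$ open. The space $X$ has the fixed point property with respect to $T$ if for every continuous map $f\colon T\times X\to X$ there is a continuous map $p\colon T\to X$ with $f(t,p(t))=p(t)$ for all $t\in T$. *)

theory Defs
  imports "HOL-Analysis.Analysis"
begin

text \<open>The underlying set of the mapping space C(T,X): continuous maps T -> X,
  normalised to be extensional (value undefined outside topspace T), so that
  each continuous map is represented exactly once.\<close>
definition cmaps :: "'a topology \<Rightarrow> 'b topology \<Rightarrow> ('a \<Rightarrow> 'b) set" where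
  "cmaps T X = {g. continuous_map T X g \<and> g \<in> extensional (topspace T)}"

definition compact_open_topology :: "'a topology \<Rightarrow> 'b topology \<Rightarrow> ('a \<Rightarrow> 'b) topology" where
  "compact_open_topology T X =
     topology_generated_by
       {{g \<in> cmaps T X. g ` K \<subseteq> U} | K U. compactin T K \<and> openin X U}"

definition fixed_point_property :: "'a topology \<Rightarrow> bool" where
  "fixed_point_property S \<longleftrightarrow>
     (\<forall>f. continuous_map S S f \<longrightarrow> (\<exists>x\<in>topspace S. f x = x))"

definition fixed_point_property_wrt :: "'b topology \<Rightarrow> 'a topology \<Rightarrow> bool" where
  "fixed_point_property_wrt X T \<longleftrightarrow>
     (\<forall>f. continuous_map (prod_topology T X) X f \<longrightarrow>
        (\<exists>p. continuous_map T X p \<and> (\<forall>t\<in>topspace T. f (t, p t) = p t)))"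

end

theory Submission
  imports Defs
begin

text \<open>Given \<open>f : T \<times> X \<rightarrow> X\<close>, a fixed point of the self-map \<open>g \<mapsto> (t \<mapsto> f (t, g t))\<close> of
  \<open>C(T,X)\<close> is exactly a continuous \<open>p\<close> with \<open>f (t, p t) = p t\<close>, so it suffices that this map is
  continuous for the compact-open topology. The preimage of a subbasic set \<open>{g. g ` K \<subseteq> U}\<close> is
  \<open>{h. \<forall>s\<in>K. f (s, h s) \<in> U}\<close>. For \<open>g\<close> in it and \<open>t \<in> K\<close>, continuity of \<open>f\<close> and \<open>g\<close> together
  with the compact neighbourhoods of the locally compact Hausdorff space \<open>T\<close> give a compact
  neighbourhood \<open>C\<close> of \<open>t\<close> and an open \<open>O \<supseteq> g ` C\<close> with \<open>f (C \<times> O) \<subseteq> U\<close>. Finitely many such \<open>C\<close>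
  cover \<open>K\<close>, and the subbasic sets \<open>{h. h ` C \<subseteq> O}\<close> intersect to a neighbourhood of \<open>g\<close> inside
  the preimage.\<close>

definition fibrewise_apply :: "'a topology \<Rightarrow> ('a \<times> 'b \<Rightarrow> 'c) \<Rightarrow> ('a \<Rightarrow> 'b) \<Rightarrow> 'a \<Rightarrow> 'c" where
  "fibrewise_apply T f g = restrict (\<lambda>t. f (t, g t)) (topspace T)"

lemma topspace_compact_open_topology [simp]:
  "topspace (compact_open_topology T X) = cmaps T X"
proof -
  have "cmaps T X \<in> {{g \<in> cmaps T X. g ` K \<subseteq> U} | K U. compactin T K \<and> openin X U}"
    by (rule CollectI, rule exI[of _ "{}"], rule exI[of _ "{}"]) auto
  then show ?thesis
    unfolding compact_open_topology_def topology_generated_by_topspace by blast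
qed

lemma openin_compact_open_subbasic:
  assumes "compactin T K" "openin X U"
  shows "openin (compact_open_topology T X) {g \<in> cmaps T X. g ` K \<subseteq> U}"
  unfolding compact_open_topology_def
  by (rule topology_generated_by_Basis) (use assms in blast)

lemma openin_compact_open_finite_Inter:
  assumes "finite F" "\<And>i. i \<in> F \<Longrightarrow> compactin T (K i) \<and> openin X (U i)"
  shows "openin (compact_open_topology T X) {g \<in> cmaps T X. \<forall>i\<in>F. g ` K i \<subseteq> U i}"
  using assms
proof (induction F rule: finite_induct)
  case empty
  then show ?case
    using openin_topspace[of "compact_open_topology T X"] by simp
next
  case (insert i F)
  have "{g \<in> cmaps T X. \<forall>j\<in>insert i F. g ` K j \<subseteq> U j} =
        {g \<in> cmaps T X. g ` K i \<subseteq> U i} \<inter> {g \<in> cmaps T X. \<forall>j\<in>F. g ` K j \<subseteq> U j}"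
    by auto
  moreover have "openin (compact_open_topology T X) {g \<in> cmaps T X. g ` K i \<subseteq> U i}"
    using insert.prems by (simp add: openin_compact_open_subbasic)
  ultimately show ?case
    using insert by (simp add: openin_Int)
qed

lemma cmaps_fibrewise_apply:
  assumes "continuous_map (prod_topology T X) Y f" "g \<in> cmaps T X"
  shows "fibrewise_apply T f g \<in> cmaps T Y"
proof -
  have "continuous_map T Y (\<lambda>t. f (t, g t))"
    using continuous_map_compose[OF continuous_map_pairedI[OF continuous_map_id] assms(1)] assms(2)
    by (simp add: cmaps_def o_def)
  then have "continuous_map T Y (fibrewise_apply T f g)"
    unfolding fibrewise_apply_def by (rule continuous_map_eq) simp
  then show ?thesis
    by (simp add: cmaps_def fibrewise_apply_def)
qed

definition compact_tube ::
    "'a topology \<Rightarrow> 'b topology \<Rightarrow> ('a \<times> 'b \<Rightarrow> 'c) \<Rightarrow> ('a \<Rightarrow> 'b) \<Rightarrow> 'c set \<Rightarrow> 'a set \<Rightarrow> 'b set \<Rightarrow> bool"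
  where "compact_tube T X f g U C Ob \<longleftrightarrow>
    compactin T C \<and> openin X Ob \<and> g ` C \<subseteq> Ob \<and> (\<forall>s\<in>C. \<forall>x\<in>Ob. f (s, x) \<in> U)"

lemma compact_tube_around_point:
  assumes nbhd: "neighbourhood_base_of (compactin T) T"
    and f: "continuous_map (prod_topology T X) Y f" and g: "continuous_map T X g"
    and U: "openin Y U" and t: "t \<in> topspace T" "f (t, g t) \<in> U"
  shows "\<exists>C Ob. t \<in> T interior_of C \<and> compact_tube T X f g U C Ob"
proof -
  define W where "W = {z \<in> topspace (prod_topology T X). f z \<in> U}"
  have W_open: "openin (prod_topology T X) W"
    unfolding W_def using openin_continuous_map_preimage[OF f U] .
  have "(t, g t) \<in> W"
    using t continuous_map_image_subset_topspace[OF g] unfolding W_def by auto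
  then have "\<exists>V Ob. openin T V \<and> openin X Ob \<and> t \<in> V \<and> g t \<in> Ob \<and> V \<times> Ob \<subseteq> W"
    using W_open openin_prod_topology_alt by metis
  then obtain V Ob where V: "openin T V" and Ob: "openin X Ob" and "t \<in> V" "g t \<in> Ob"
    and VO: "V \<times> Ob \<subseteq> W"
    by metis
  define V' where "V' = V \<inter> {s \<in> topspace T. g s \<in> Ob}"
  have "openin T V'"
    unfolding V'_def using V openin_continuous_map_preimage[OF g Ob] by blast
  moreover have "t \<in> V'"
    unfolding V'_def using \<open>t \<in> V\<close> \<open>g t \<in> Ob\<close> t by blast
  ultimately obtain A C where "openin T A" "compactin T C" "t \<in> A" "A \<subseteq> C" "C \<subseteq> V'"
    using nbhd unfolding neighbourhood_base_of by meson
  have "t \<in> T interior_of C"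
    using interior_of_maximal[OF \<open>A \<subseteq> C\<close> \<open>openin T A\<close>] \<open>t \<in> A\<close> by blast
  moreover have "g ` C \<subseteq> Ob"
    using \<open>C \<subseteq> V'\<close> unfolding V'_def by blast
  moreover have "\<forall>s\<in>C. \<forall>x\<in>Ob. f (s, x) \<in> U"
    using \<open>C \<subseteq> V'\<close> VO unfolding V'_def W_def by blast
  ultimately show ?thesis
    unfolding compact_tube_def using \<open>compactin T C\<close> Ob by blast
qed

lemma finite_compact_tube_cover:
  assumes nbhd: "neighbourhood_base_of (compactin T) T"
    and f: "continuous_map (prod_topology T X) Y f" and g: "continuous_map T X g"
    and K: "compactin T K" and U: "openin Y U" and gK: "\<forall>s\<in>K. f (s, g s) \<in> U"
  obtains F C Ob where "finite F" "F \<subseteq> K" "K \<subseteq> (\<Union>t\<in>F. C t)"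
    "\<forall>t\<in>F. compact_tube T X f g U (C t) (Ob t)"
proof -
  have "\<forall>t\<in>K. \<exists>C Ob. t \<in> T interior_of C \<and> compact_tube T X f g U C Ob"
  proof
    fix t assume "t \<in> K"
    then show "\<exists>C Ob. t \<in> T interior_of C \<and> compact_tube T X f g U C Ob"
      using compactin_subset_topspace[OF K] gK
      by (intro compact_tube_around_point[OF nbhd f g U]) auto
  qed
  then obtain C Ob where CO: "\<forall>t\<in>K. t \<in> T interior_of C t \<and> compact_tube T X f g U (C t) (Ob t)"
    by metis
  have "\<forall>V \<in> (\<lambda>t. T interior_of C t) ` K. openin T V" "K \<subseteq> (\<Union>t\<in>K. T interior_of C t)"
    using CO by auto
  then obtain F0 where "finite F0" "F0 \<subseteq> (\<lambda>t. T interior_of C t) ` K" "K \<subseteq> \<Union>F0"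
    using K unfolding compactin_def by meson
  then obtain F where F: "finite F" "F \<subseteq> K" "K \<subseteq> (\<Union>t\<in>F. T interior_of C t)"
    using finite_subset_image[of F0 "\<lambda>t. T interior_of C t" K] by blast
  have "(\<Union>t\<in>F. T interior_of C t) \<subseteq> (\<Union>t\<in>F. C t)"
    by (intro UN_mono order_refl interior_of_subset)
  with F(3) have "K \<subseteq> (\<Union>t\<in>F. C t)"
    by (rule order_trans)
  moreover have "\<forall>t\<in>F. compact_tube T X f g U (C t) (Ob t)"
    using CO F(2) by blast
  ultimately show ?thesis
    using F(1,2) that by blast
qed

lemma openin_compact_open_fibrewise_preimage:
  assumes nbhd: "neighbourhood_base_of (compactin T) T"
    and f: "continuous_map (prod_topology T X) Y f"
    and K: "compactin T K" and U: "openin Y U"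
  shows "openin (compact_open_topology T X) {h \<in> cmaps T X. \<forall>s\<in>K. f (s, h s) \<in> U}"
    (is "openin ?CO ?P")
proof (subst openin_subopen, intro ballI)
  fix g assume "g \<in> ?P"
  then have g: "continuous_map T X g" "g \<in> cmaps T X" and gK: "\<forall>s\<in>K. f (s, g s) \<in> U"
    by (auto simp: cmaps_def)
  obtain F C Ob where F: "finite F" "F \<subseteq> K" "K \<subseteq> (\<Union>t\<in>F. C t)"
    and CO: "\<forall>t\<in>F. compact_tube T X f g U (C t) (Ob t)"
    by (rule finite_compact_tube_cover[OF nbhd f g(1) K U gK])
  define N where "N = {h \<in> cmaps T X. \<forall>t\<in>F. h ` C t \<subseteq> Ob t}"
  have "openin ?CO N"
    unfolding N_def using F CO
    by (intro openin_compact_open_finite_Inter) (auto simp: compact_tube_def)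
  moreover have "g \<in> N"
    unfolding N_def using g CO by (auto simp: compact_tube_def)
  moreover have "N \<subseteq> ?P"
  proof
    fix h assume h: "h \<in> N"
    have "f (s, h s) \<in> U" if "s \<in> K" for s
    proof -
      obtain t where "t \<in> F" "s \<in> C t"
        using F(3) \<open>s \<in> K\<close> by blast
      moreover have "h ` C t \<subseteq> Ob t"
        using h \<open>t \<in> F\<close> unfolding N_def by blast
      ultimately show ?thesis
        using CO unfolding compact_tube_def by blast
    qed
    then show "h \<in> ?P"
      using h unfolding N_def by blast
  qed
  ultimately show "\<exists>N. openin ?CO N \<and> g \<in> N \<and> N \<subseteq> ?P"
    by blast
qed

lemma continuous_map_compact_open_fibrewise_apply:
  assumes nbhd: "neighbourhood_base_of (compactin T) T"
    and f: "continuous_map (prod_topology T X) Y f"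
  shows "continuous_map (compact_open_topology T X) (compact_open_topology T Y) (fibrewise_apply T f)"
  unfolding compact_open_topology_def[of T Y]
proof (rule continuous_on_generated_topo)
  fix B assume "B \<in> {{g \<in> cmaps T Y. g ` K \<subseteq> U} | K U. compactin T K \<and> openin Y U}"
  then obtain K U where K: "compactin T K" and U: "openin Y U" and B: "B = {g \<in> cmaps T Y. g ` K \<subseteq> U}"
    by blast
  have "fibrewise_apply T f -` B \<inter> topspace (compact_open_topology T X) =
        {h \<in> cmaps T X. \<forall>s\<in>K. f (s, h s) \<in> U}"
    using cmaps_fibrewise_apply[OF f] compactin_subset_topspace[OF K]
    unfolding B by (auto simp: fibrewise_apply_def)
  then show "openin (compact_open_topology T X) (fibrewise_apply T f -` B \<inter> topspace (compact_open_topology T X))"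
    using openin_compact_open_fibrewise_preimage[OF nbhd f K U] by simp
next
  show "fibrewise_apply T f ` topspace (compact_open_topology T X) \<subseteq>
        \<Union>{{g \<in> cmaps T Y. g ` K \<subseteq> U} | K U. compactin T K \<and> openin Y U}"
    using cmaps_fibrewise_apply[OF f] topspace_compact_open_topology[of T Y]
    unfolding compact_open_topology_def topology_generated_by_topspace by auto
qed

theorem corollary6p2:
  fixes X :: "'b topology" and T :: "'a topology"
  assumes "locally_compact_space T"
    and "Hausdorff_space T"
    and "fixed_point_property (compact_open_topology T X)"
  shows "fixed_point_property_wrt X T"
  unfolding fixed_point_property_wrt_def
proof (intro allI impI)
  fix f assume f: "continuous_map (prod_topology T X) X f"
  have "neighbourhood_base_of (compactin T) T"
    using assms(1,2) locally_compact_space_neighbourhood_base by blast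
  then obtain g where g: "g \<in> cmaps T X" "fibrewise_apply T f g = g"
    using assms(3) continuous_map_compact_open_fibrewise_apply[OF _ f]
    unfolding fixed_point_property_def by force
  have "f (t, g t) = g t" if "t \<in> topspace T" for t
    using fun_cong[OF g(2), of t] that by (simp add: fibrewise_apply_def)
  then show "\<exists>p. continuous_map T X p \<and> (\<forall>t\<in>topspace T. f (t, p t) = p t)"
    using g(1) unfolding cmaps_def by blast
qed

end
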